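(* Let $0<\sigma<\tau$, let $\kappa_\sigma,\kappa_2$ satisfy $0<\kappa_\sigma<\kappa_2<1$, and let $\omega_\sigma>0$. Let \[ \sigma<t_2\le\min\Bigl\{\sigma+\frac{\kappa_\sigma}{2\omega_\sigma},\,\tau\Bigr\},\qquad 0<\omega\le\frac{\kappa_2-\kappa_\sigma}{t_2-\sigma}, \] and \[ \mu^\star(\kappa_2,\kappa_\sigma,t_2,\omega_\sigma):=\frac{\kappa_2-\kappa_\sigma+(t_2-\sigma)\omega_\sigma}{g_*(\kappa_\sigma/2,\kappa_2)\int_\sigma^{t_2}A^-(\sigma,\xi)\,d\xi}. \] Then for every $\mu>\mu^\star(\kappa_2,\kappa_\sigma,t_2,\omega_\sigma)$, any solution $(x(t),y(t))$ on $[\sigma,\tau]$ of \[ x'=y,\qquad y'=\mu a^-(t)g(x) \] with $x(\sigma)=\kappa_\sigma$ and $y(\sigma)\ge-\omega_\sigma$ satisfies $x(t_2)>\kappa_2$ and $y(t_2)>\omega$.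
   Context: $a\in L^1(\sigma,\tau)$ with negative part $a^-\ge0$, and $A^-(t',t''):=\int_{t'}^{t''}a^-(\xi)\,d\xi$; it is assumed that $A^-(\sigma,t)>0$ for all $t\in(\sigma,\tau]$. $g\colon\mathbb{R}\to[0,+\infty)$ is the extension by zero outside $[0,1]$ of a locally Lipschitz continuous function $g\colon[0,1]\to[0,+\infty)$ with $g(0)=g(1)=0$, $g(s)>0$ for $0<s<1$ and $\lim_{s\to0^+}g(s)/s=0$. For $0\le\kappa'<\kappa''\le1$, $g_*(\kappa',\kappa''):=\min_{s\in[\kappa',\kappa'']}g(s)$. Solutions are in the Carathéodory sense. *)

theory Defs
  imports "HOL-Analysis.Analysis"
begin

definition negpart :: "(real \<Rightarrow> real) \<Rightarrow> real \<Rightarrow> real" where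
  "negpart a t = max 0 (- a t)"

definition Aminus :: "(real \<Rightarrow> real) \<Rightarrow> real \<Rightarrow> real \<Rightarrow> real" where
  "Aminus a t1 t2 = integral {t1..t2} (negpart a)"

definition gstar :: "(real \<Rightarrow> real) \<Rightarrow> real \<Rightarrow> real \<Rightarrow> real" where
  "gstar g k1 k2 = Inf (g ` {k1..k2})"

definition admissible_g :: "(real \<Rightarrow> real) \<Rightarrow> bool" where
  "admissible_g g \<longleftrightarrow>
     (\<forall>s. s \<notin> {0..1} \<longrightarrow> g s = 0) \<and>
     (\<forall>s\<in>{0..1}. g s \<ge> 0) \<and>
     (\<forall>s\<in>{0..1}. \<exists>e>0. \<exists>L. L-lipschitz_on (cball s e \<inter> {0..1}) g) \<and>
     g 0 = 0 \<and> g 1 = 0 \<and>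
     (\<forall>s. 0 < s \<and> s < 1 \<longrightarrow> g s > 0) \<and>
     ((\<lambda>s. g s / s) \<longlongrightarrow> 0) (at_right 0)"

text \<open>Caratheodory solution on [sigma,tau] of x' = y, y' = mu a^-(t) g(x):
  x, y absolutely continuous, i.e. given by Lebesgue integrals of their
  (integrable) derivatives, which satisfy the system a.e.\<close>
definition cara_solution ::
  "(real \<Rightarrow> real) \<Rightarrow> (real \<Rightarrow> real) \<Rightarrow> real \<Rightarrow> real \<Rightarrow> real \<Rightarrow>
   (real \<Rightarrow> real) \<Rightarrow> (real \<Rightarrow> real) \<Rightarrow> bool" where
  "cara_solution a g mu \<sigma> \<tau> x y \<longleftrightarrow>
     y absolutely_integrable_on {\<sigma>..\<tau>} \<and>
     (\<lambda>s. mu * negpart a s * g (x s)) absolutely_integrable_on {\<sigma>..\<tau>} \<and>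
     (\<forall>t\<in>{\<sigma>..\<tau>}.
        (y has_integral (x t - x \<sigma>)) {\<sigma>..t} \<and>
        ((\<lambda>s. mu * negpart a s * g (x s)) has_integral (y t - y \<sigma>)) {\<sigma>..t})"

end

theory Submission imports Defs begin

text \<open>Since \<open>y' = \<mu> a\<^sup>-(t) g(x) \<ge> 0\<close>, \<open>y\<close> is nondecreasing, so \<open>y \<ge> -\<omega>\<sigma>\<close> and the choice of
  \<open>t2\<close> keeps \<open>x \<ge> \<kappa>\<sigma>/2\<close> on \<open>[\<sigma>,t2]\<close>. If \<open>x(t2) \<le> \<kappa>2\<close>, then \<open>x\<close> never exceeded \<open>\<kappa>2\<close>
  (once the convex function \<open>x\<close> rises above \<open>x(\<sigma>)\<close> it keeps rising), so \<open>g(x) \<ge> g\<^sub>*\<close>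
  throughout; integrating \<open>y' \<ge> \<mu> g\<^sub>* a\<^sup>-\<close> twice then gives
  \<open>x(t2) \<ge> \<kappa>\<sigma> - (t2-\<sigma>)\<omega>\<sigma> + \<mu> g\<^sub>* \<integral>A\<^sup>- > \<kappa>2\<close>, a contradiction. Finally
  \<open>x(t2) - \<kappa>\<sigma> \<le> (t2-\<sigma>) y(t2)\<close> by monotonicity of \<open>y\<close>, which yields \<open>y(t2) > \<omega>\<close>.\<close>

lemma admissible_g_nonneg: "admissible_g g \<Longrightarrow> 0 \<le> g u"
  unfolding admissible_g_def by (metis order_refl)

lemma admissible_g_continuous_on:
  assumes "admissible_g g"
  shows "continuous_on {0..1} g"
proof -
  have "local_lipschitz {0::real} {0..1} (\<lambda>_. g)"
    using assms unfolding admissible_g_def local_lipschitz_def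
    by (metis lipschitz_on_subset inf_mono cball_subset_cball_iff min.cobounded1 min.cobounded2
        order_refl min.strict_order_iff)
  then show ?thesis
    using local_lipschitz_continuous_on by blast
qed

lemma gstar_le:
  assumes "continuous_on {k1..k2} g" "u \<in> {k1..k2}"
  shows "gstar g k1 k2 \<le> g u"
  unfolding gstar_def
  using assms by (intro cInf_lower bounded_imp_bdd_below compact_imp_bounded
      compact_continuous_image compact_Icc) auto

lemma gstar_pos:
  assumes "continuous_on {k1..k2} g" "k1 \<le> k2" "\<forall>u\<in>{k1..k2}. 0 < g u"
  shows "0 < gstar g k1 k2"
proof -
  obtain z where "z \<in> {k1..k2}" "\<And>u. u \<in> {k1..k2} \<Longrightarrow> g z \<le> g u"
    using continuous_attains_inf[OF compact_Icc _ assms(1)] assms(2) by auto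
  then have "gstar g k1 k2 = g z"
    unfolding gstar_def by (intro cInf_eq_minimum) auto
  with \<open>z \<in> {k1..k2}\<close> assms(3) show ?thesis by simp
qed

lemma admissible_g_gstar:
  assumes "admissible_g g" "0 < k1" "k1 \<le> k2" "k2 < 1"
  shows "0 < gstar g k1 k2" "\<forall>u\<in>{k1..k2}. gstar g k1 k2 \<le> g u"
proof -
  have "continuous_on {k1..k2} g"
    using admissible_g_continuous_on[OF assms(1)] assms(2-4) by (auto intro: continuous_on_subset)
  moreover have "\<forall>u\<in>{k1..k2}. 0 < g u"
    using assms unfolding admissible_g_def by auto
  ultimately show "0 < gstar g k1 k2" "\<forall>u\<in>{k1..k2}. gstar g k1 k2 \<le> g u"
    using gstar_pos gstar_le assms(3) by auto
qed

lemma negpart_nonneg: "0 \<le> negpart a t"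
  by (simp add: negpart_def)

lemma negpart_integrable_on:
  assumes "a absolutely_integrable_on S"
  shows "negpart a integrable_on S"
proof -
  have "(\<lambda>s. (\<bar>a s\<bar> - a s) / 2) integrable_on S"
    using assms unfolding absolutely_integrable_on_def
    by (intro integrable_on_divide integrable_diff) auto
  moreover have "(\<lambda>s. (\<bar>a s\<bar> - a s) / 2) = negpart a"
    by (auto simp: negpart_def fun_eq_iff)
  ultimately show ?thesis by simp
qed

lemma has_integral_primitive_increment:
  fixes f F :: "real \<Rightarrow> real"
  assumes prim: "\<forall>t\<in>{a..b}. (f has_integral (F t - F a)) {a..t}"
    and "a \<le> s" "s \<le> t" "t \<le> b"
  shows "(f has_integral (F t - F s)) {s..t}"
proof -
  have "f integrable_on {a..t}"
    using prim assms by auto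
  then have "f integrable_on {s..t}" and
    "integral {a..s} f + integral {s..t} f = integral {a..t} f"
    using assms by (auto intro: integrable_on_subinterval Henstock_Kurzweil_Integration.integral_combine)
  moreover have "integral {a..s} f = F s - F a" "integral {a..t} f = F t - F a"
    using prim assms by (auto intro: integral_unique)
  ultimately show ?thesis
    by (simp add: has_integral_integrable_integral)
qed

lemma mono_on_primitive_nonneg:
  fixes f F :: "real \<Rightarrow> real"
  assumes "\<forall>t\<in>{a..b}. (f has_integral (F t - F a)) {a..t}" "\<forall>t\<in>{a..b}. 0 \<le> f t"
  shows "mono_on {a..b} F"
proof (intro mono_onI)
  fix s t assume "s \<in> {a..b}" "t \<in> {a..b}" "s \<le> t"
  then have "0 \<le> F t - F s"
    using assms by (intro has_integral_nonneg[OF has_integral_primitive_increment[OF assms(1)]]) auto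
  then show "F s \<le> F t" by simp
qed

lemma has_integral_mono_on_bounds:
  fixes f :: "real \<Rightarrow> real"
  assumes "(f has_integral I) {s..t}" "mono_on {s..t} f" "s \<le> t"
  shows "(t - s) * f s \<le> I" "I \<le> (t - s) * f t"
  using has_integral_le[OF has_integral_const_real assms(1), of "f s"]
    has_integral_le[OF assms(1) has_integral_const_real, of "f t"] assms(2,3)
  by (auto simp: mono_on_def mult.commute)

lemma primitive_mono_on_stays_above:
  fixes f F :: "real \<Rightarrow> real"
  assumes prim: "\<forall>t\<in>{a..b}. (f has_integral (F t - F a)) {a..t}" and mono: "mono_on {a..b} f"
    and "a \<le> s" "s \<le> t" "t \<le> b" "F a < F s"
  shows "F s \<le> F t"
proof -
  have "F s - F a \<le> (s - a) * f s"
    using assms by (intro has_integral_mono_on_bounds(2) has_integral_primitive_increment[OF prim]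
        mono_on_subset[OF mono]) auto
  with \<open>F a < F s\<close> \<open>a \<le> s\<close> have "0 \<le> f s"
    by (smt (verit) mult_nonneg_nonpos)
  moreover have "(t - s) * f s \<le> F t - F s"
    using assms by (intro has_integral_mono_on_bounds(1) has_integral_primitive_increment[OF prim]
        mono_on_subset[OF mono]) auto
  ultimately show ?thesis
    using \<open>s \<le> t\<close> by (smt (verit) mult_nonneg_nonneg)
qed

lemma integral_pos_mono_on:
  fixes h :: "real \<Rightarrow> real"
  assumes "mono_on {a..b} h" "a < b" "0 \<le> h a" "\<forall>t\<in>{a<..b}. 0 < h t"
  shows "0 < integral {a..b} h"
proof -
  define m where "m = (a + b) / 2"
  have m: "a < m" "m < b" using assms(2) by (auto simp: m_def)
  have int: "h integrable_on {a..b}"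
    using assms(1) by (rule integrable_on_mono_on)
  have "integral {a..m} h + integral {m..b} h = integral {a..b} h"
    using m int by (intro Henstock_Kurzweil_Integration.integral_combine) auto
  moreover have "(m - a) * h a \<le> integral {a..m} h" "(b - m) * h m \<le> integral {m..b} h"
    using m int assms(1)
    by (auto intro!: has_integral_mono_on_bounds(1) integrable_integral integrable_on_subinterval
        mono_on_subset[OF assms(1)])
  moreover have "0 < (b - m) * h m" "0 \<le> (m - a) * h a"
    using m assms(3,4) by auto
  ultimately show ?thesis by linarith
qed

lemma Aminus_primitive:
  assumes "a absolutely_integrable_on {\<sigma>..\<tau>}"
  shows "\<forall>t\<in>{\<sigma>..\<tau>}. (negpart a has_integral (Aminus a \<sigma> t - Aminus a \<sigma> \<sigma>)) {\<sigma>..t}"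
  using integrable_on_subinterval[OF negpart_integrable_on[OF assms]]
  by (auto simp: Aminus_def)

lemma Aminus_mono_on:
  assumes "a absolutely_integrable_on {\<sigma>..\<tau>}" "t2 \<le> \<tau>"
  shows "mono_on {\<sigma>..t2} (Aminus a \<sigma>)"
proof -
  have "mono_on {\<sigma>..\<tau>} (Aminus a \<sigma>)"
    using Aminus_primitive[OF assms(1)] by (rule mono_on_primitive_nonneg) (simp add: negpart_nonneg)
  then show ?thesis
    by (rule mono_on_subset) (use assms(2) in auto)
qed

lemma integral_Aminus_pos:
  assumes "a absolutely_integrable_on {\<sigma>..\<tau>}" "\<forall>t\<in>{\<sigma><..\<tau>}. 0 < Aminus a \<sigma> t"
    and "\<sigma> < t2" "t2 \<le> \<tau>"
  shows "0 < integral {\<sigma>..t2} (Aminus a \<sigma>)"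
  using Aminus_mono_on[OF assms(1,4)] assms(3)
proof (rule integral_pos_mono_on)
qed (use assms in \<open>auto simp: Aminus_def\<close>)

lemma cara_solution_lower_bound:
  assumes sol: "cara_solution a g mu \<sigma> \<tau> x y" and a: "a absolutely_integrable_on {\<sigma>..\<tau>}"
    and "\<sigma> \<le> t2" "t2 \<le> \<tau>" "0 \<le> mu" and G: "\<forall>s\<in>{\<sigma>..t2}. G \<le> g (x s)"
  shows "x \<sigma> + (t2 - \<sigma>) * y \<sigma> + mu * G * integral {\<sigma>..t2} (Aminus a \<sigma>) \<le> x t2"
proof -
  define f where "f = (\<lambda>s. mu * negpart a s * g (x s))"
  have yprim: "\<forall>t\<in>{\<sigma>..\<tau>}. (f has_integral (y t - y \<sigma>)) {\<sigma>..t}"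
    and xprim: "\<forall>t\<in>{\<sigma>..\<tau>}. (y has_integral (x t - x \<sigma>)) {\<sigma>..t}"
    using sol unfolding cara_solution_def f_def by blast+
  have Aint: "Aminus a \<sigma> integrable_on {\<sigma>..t2}"
    using Aminus_mono_on[OF a \<open>t2 \<le> \<tau>\<close>] by (rule integrable_on_mono_on)
  have ybound: "y \<sigma> + mu * G * Aminus a \<sigma> t \<le> y t" if t: "t \<in> {\<sigma>..t2}" for t
  proof -
    have "(negpart a has_integral Aminus a \<sigma> t) {\<sigma>..t}"
      using Aminus_primitive[OF a] t \<open>t2 \<le> \<tau>\<close> by (auto simp: Aminus_def)
    then have "((\<lambda>s. mu * G * negpart a s) has_integral mu * G * Aminus a \<sigma> t) {\<sigma>..t}"
      by (rule has_integral_mult_right)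
    moreover have "(f has_integral (y t - y \<sigma>)) {\<sigma>..t}"
      using yprim t \<open>t2 \<le> \<tau>\<close> by auto
    moreover have "mu * G * negpart a s \<le> f s" if "s \<in> {\<sigma>..t}" for s
    proof -
      have "mu * negpart a s * G \<le> mu * negpart a s * g (x s)"
        using G that t \<open>0 \<le> mu\<close> by (intro mult_left_mono) (auto simp: negpart_nonneg)
      then show ?thesis by (simp add: f_def mult_ac)
    qed
    ultimately have "mu * G * Aminus a \<sigma> t \<le> y t - y \<sigma>"
      by (rule has_integral_le)
    then show ?thesis by simp
  qed
  have "((\<lambda>t. y \<sigma> + mu * G * Aminus a \<sigma> t) has_integral
      (t2 - \<sigma>) * y \<sigma> + mu * G * integral {\<sigma>..t2} (Aminus a \<sigma>)) {\<sigma>..t2}"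
    using has_integral_const_real[of "y \<sigma>" \<sigma> t2] \<open>\<sigma> \<le> t2\<close>
    by (intro has_integral_add has_integral_mult_right integrable_integral Aint)
      (simp_all add: mult.commute)
  moreover have "(y has_integral (x t2 - x \<sigma>)) {\<sigma>..t2}"
    using xprim assms(3,4) by auto
  ultimately have "(t2 - \<sigma>) * y \<sigma> + mu * G * integral {\<sigma>..t2} (Aminus a \<sigma>) \<le> x t2 - x \<sigma>"
    using ybound by (rule has_integral_le)
  then show ?thesis by simp
qed

lemma cara_solution_y_mono_on:
  assumes "cara_solution a g mu \<sigma> \<tau> x y" "0 \<le> mu" "\<forall>u. 0 \<le> g u"
  shows "mono_on {\<sigma>..\<tau>} y"
proof (rule mono_on_primitive_nonneg)
  show "\<forall>t\<in>{\<sigma>..\<tau>}. ((\<lambda>s. mu * negpart a s * g (x s)) has_integral (y t - y \<sigma>)) {\<sigma>..t}"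
    using assms(1) unfolding cara_solution_def by blast
qed (use assms(2,3) in \<open>simp add: negpart_nonneg\<close>)

lemma cara_solution_x_increment_bounds:
  assumes sol: "cara_solution a g mu \<sigma> \<tau> x y" and mono: "mono_on {\<sigma>..\<tau>} y"
    and s: "\<sigma> \<le> s" "s \<le> \<tau>"
  shows "(s - \<sigma>) * y \<sigma> \<le> x s - x \<sigma>" "x s - x \<sigma> \<le> (s - \<sigma>) * y s"
proof -
  have "\<forall>t\<in>{\<sigma>..\<tau>}. (y has_integral (x t - x \<sigma>)) {\<sigma>..t}"
    using sol unfolding cara_solution_def by blast
  then have "(y has_integral (x s - x \<sigma>)) {\<sigma>..s}"
    using s by simp
  moreover have "mono_on {\<sigma>..s} y"
    by (rule mono_on_subset[OF mono]) (use s in auto)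
  ultimately show "(s - \<sigma>) * y \<sigma> \<le> x s - x \<sigma>" "x s - x \<sigma> \<le> (s - \<sigma>) * y s"
    using has_integral_mono_on_bounds s by auto
qed

lemma cara_solution_exceeds_level:
  assumes sol: "cara_solution a g mu \<sigma> \<tau> x y" and a: "a absolutely_integrable_on {\<sigma>..\<tau>}"
    and mono: "mono_on {\<sigma>..\<tau>} y" and "\<sigma> \<le> t2" "t2 \<le> \<tau>" "0 \<le> mu" "0 \<le> \<omega>"
    and G: "\<forall>u\<in>{\<kappa>1..\<kappa>2}. G \<le> g u" and "- \<omega> \<le> y \<sigma>"
    and "\<kappa>1 \<le> x \<sigma> - (t2 - \<sigma>) * \<omega>" "x \<sigma> < \<kappa>2"
    and big: "\<kappa>2 - x \<sigma> + (t2 - \<sigma>) * \<omega> < mu * G * integral {\<sigma>..t2} (Aminus a \<sigma>)"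
  shows "\<kappa>2 < x t2"
proof (rule ccontr)
  assume "\<not> \<kappa>2 < x t2"
  have xprim: "\<forall>t\<in>{\<sigma>..\<tau>}. (y has_integral (x t - x \<sigma>)) {\<sigma>..t}"
    using sol unfolding cara_solution_def by blast
  have drift: "- ((s - \<sigma>) * \<omega>) \<le> (s - \<sigma>) * y \<sigma>" if "\<sigma> \<le> s" for s
    using mult_left_mono[of "- \<omega>" "y \<sigma>" "s - \<sigma>"] \<open>- \<omega> \<le> y \<sigma>\<close> that by simp
  have "\<kappa>1 \<le> x s" if s: "s \<in> {\<sigma>..t2}" for s
  proof -
    have "(s - \<sigma>) * \<omega> \<le> (t2 - \<sigma>) * \<omega>"
      using s \<open>0 \<le> \<omega>\<close> by (intro mult_right_mono) auto
    then show ?thesis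
      using cara_solution_x_increment_bounds(1)[OF sol mono, of s] drift[of s] s assms(5,10) by simp
  qed
  moreover have "x s \<le> \<kappa>2" if s: "s \<in> {\<sigma>..t2}" for s
  proof (rule ccontr)
    assume "\<not> x s \<le> \<kappa>2"
    then have "x s \<le> x t2"
      using primitive_mono_on_stays_above[OF xprim mono _ _ \<open>t2 \<le> \<tau>\<close>] s \<open>x \<sigma> < \<kappa>2\<close> by simp
    with \<open>\<not> x s \<le> \<kappa>2\<close> \<open>\<not> \<kappa>2 < x t2\<close> show False by simp
  qed
  ultimately have "\<forall>s\<in>{\<sigma>..t2}. G \<le> g (x s)"
    using G by auto
  from cara_solution_lower_bound[OF sol a \<open>\<sigma> \<le> t2\<close> \<open>t2 \<le> \<tau>\<close> \<open>0 \<le> mu\<close> this]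
  show False
    using big drift[of t2] \<open>\<sigma> \<le> t2\<close> \<open>\<not> \<kappa>2 < x t2\<close> by linarith
qed

theorem lemma2p7:
  fixes a g :: "real \<Rightarrow> real" and \<sigma> \<tau> \<kappa>\<sigma> \<kappa>2 \<omega>\<sigma> t2 \<omega> :: real
  assumes a_L1: "a absolutely_integrable_on {\<sigma>..\<tau>}"
    and A_pos: "\<forall>t\<in>{\<sigma><..\<tau>}. Aminus a \<sigma> t > 0"
    and g_adm: "admissible_g g"
    and st: "0 < \<sigma>" "\<sigma> < \<tau>"
    and kk: "0 < \<kappa>\<sigma>" "\<kappa>\<sigma> < \<kappa>2" "\<kappa>2 < 1"
    and om_s: "\<omega>\<sigma> > 0"
    and t2: "\<sigma> < t2" "t2 \<le> min (\<sigma> + \<kappa>\<sigma> / (2 * \<omega>\<sigma>)) \<tau>"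
    and om: "0 < \<omega>" "\<omega> \<le> (\<kappa>2 - \<kappa>\<sigma>) / (t2 - \<sigma>)"
  shows "\<forall>mu x y.
     mu > (\<kappa>2 - \<kappa>\<sigma> + (t2 - \<sigma>) * \<omega>\<sigma>) /
          (gstar g (\<kappa>\<sigma> / 2) \<kappa>2 * integral {\<sigma>..t2} (\<lambda>\<xi>. Aminus a \<sigma> \<xi>)) \<and>
     cara_solution a g mu \<sigma> \<tau> x y \<and> x \<sigma> = \<kappa>\<sigma> \<and> y \<sigma> \<ge> - \<omega>\<sigma>
     \<longrightarrow> x t2 > \<kappa>2 \<and> y t2 > \<omega>"
proof (intro allI impI)
  fix mu and x y :: "real \<Rightarrow> real"
  define G where "G = gstar g (\<kappa>\<sigma> / 2) \<kappa>2"
  define I where "I = integral {\<sigma>..t2} (Aminus a \<sigma>)"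
  assume "mu > (\<kappa>2 - \<kappa>\<sigma> + (t2 - \<sigma>) * \<omega>\<sigma>) /
          (gstar g (\<kappa>\<sigma> / 2) \<kappa>2 * integral {\<sigma>..t2} (\<lambda>\<xi>. Aminus a \<sigma> \<xi>)) \<and>
     cara_solution a g mu \<sigma> \<tau> x y \<and> x \<sigma> = \<kappa>\<sigma> \<and> y \<sigma> \<ge> - \<omega>\<sigma>"
  then have mu: "(\<kappa>2 - \<kappa>\<sigma> + (t2 - \<sigma>) * \<omega>\<sigma>) / (G * I) < mu"
    and sol: "cara_solution a g mu \<sigma> \<tau> x y" and x0: "x \<sigma> = \<kappa>\<sigma>" and y0: "- \<omega>\<sigma> \<le> y \<sigma>"
    by (auto simp: G_def I_def)
  have t2\<tau>: "t2 \<le> \<tau>" and t2_short: "(t2 - \<sigma>) * \<omega>\<sigma> \<le> \<kappa>\<sigma> / 2"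
    using t2 om_s by (auto simp: field_simps)
  have G: "0 < G" "\<forall>u\<in>{\<kappa>\<sigma> / 2..\<kappa>2}. G \<le> g u"
    using admissible_g_gstar[OF g_adm, of "\<kappa>\<sigma> / 2" \<kappa>2] kk unfolding G_def by auto
  have "0 < I"
    using integral_Aminus_pos[OF a_L1 A_pos t2(1) t2\<tau>] by (simp add: I_def)
  with G have GI: "0 < G * I" by simp
  then have muGI: "\<kappa>2 - \<kappa>\<sigma> + (t2 - \<sigma>) * \<omega>\<sigma> < mu * G * I"
    using mu by (simp add: pos_divide_less_eq mult.assoc)
  moreover have "0 < \<kappa>2 - \<kappa>\<sigma> + (t2 - \<sigma>) * \<omega>\<sigma>"
    using kk t2 om_s by (intro add_pos_pos mult_pos_pos) auto
  ultimately have "0 \<le> mu"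
    using GI by (smt (verit) mult.assoc mult_nonpos_nonneg)
  have ymono: "mono_on {\<sigma>..\<tau>} y"
    using cara_solution_y_mono_on[OF sol \<open>0 \<le> mu\<close>] admissible_g_nonneg[OF g_adm] by blast
  have xt2: "\<kappa>2 < x t2"
    using cara_solution_exceeds_level[OF sol a_L1 ymono _ t2\<tau> \<open>0 \<le> mu\<close>, of \<omega>\<sigma>, OF _ _ G(2)]
      muGI om_s y0 t2 x0 kk t2_short
    unfolding I_def by simp
  have "(t2 - \<sigma>) * \<omega> \<le> \<kappa>2 - \<kappa>\<sigma>"
    using om t2 by (simp add: pos_le_divide_eq mult.commute)
  moreover have "x t2 - \<kappa>\<sigma> \<le> (t2 - \<sigma>) * y t2"
    using cara_solution_x_increment_bounds(2)[OF sol ymono, of t2] t2 x0 by simp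
  ultimately have "(t2 - \<sigma>) * \<omega> < (t2 - \<sigma>) * y t2"
    using xt2 by linarith
  with xt2 t2 show "\<kappa>2 < x t2 \<and> \<omega> < y t2"
    by simp
qed

end
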